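(* Let $X$, $P$ (irreducible, row-stochastic), $\Sigma$, $\mu$, $\{A_i\}_{i\in X}$ be as in the context, with $\{A_i\}$ projectively uniformly hyperbolic with respect to $\Sigma$ and a multicone fixed; let $R$, $Q$, a recurrent class $C$, $\Sigma_C$, $\pi$ and $\mu_C$ be as in the context. Define $\vartheta:\Sigma_C\to\Sigma$ by $\vartheta((r_n)_{n\ge0})=(\tau(r_n))_{n\ge0}$. Then $\vartheta$ is surjective and $\vartheta_*\mu_C=\mu$.
   Context: $X$ finite; $P$ row-stochastic and irreducible; $\Sigma=\{x\in X^{\mathbb N_0}:P_{x_nx_{n+1}}>0\ \forall n\}$; $p$ the stationary probability vector; $\mu$ the Markov measure with $\mu([i_0,\dots,i_n])=p_{i_0}P_{i_0i_1}\cdots P_{i_{n-1}i_n}$. Projective uniform hyperbolicity: on $\widehat\Sigma=\{(x_n)_{n\in\mathbb Z}:P_{x_nx_{n+1}}>0\}$ with left shift $\widehat\sigma$ there is a continuous splitting $\mathbb R^2=E^d(\hat x)\oplus E^w(\hat x)$ into lines with $A_{x_0}E^*(\hat x)=E^*(\widehat\sigma\hat x)$ ($*=d,w$) and $n\ge1$ with $\|A_{x_{n-1}}\cdots A_{x_0}|_{E^w(\hat x)}\|<\|A_{x_{n-1}}\cdots A_{x_0}|_{E^d(\hat x)}\|$ for all $\hat x$. A multicone is a family $\{M_i\}$ of non-empty proper subsets of $\mathbb{RP}^1$, each a finite union of open intervals, with $\overline{[A_j](M_i)}\subset M_j$ whenever $P_{ij}>0$ ($[A]$ the projective action). Write $M_i=\bigsqcup_{a=1}^{m(i)}M_{i,a}$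 (components); for $P_{ij}>0$ let $\beta(i,a,j)$ be the unique $b$ with $[A_j](\overline{M_{i,a}})\subset M_{j,b}$. $R=\{((i,a),(j,b)):P_{ij}>0,\ 1\le a\le m(i),\ b=\beta(i,a,j)\}$, and for $r=((i,a),(j,b))$: $s(r)=(i,a)$, $t(r)=(j,b)$, $\tau(r)=j$. $Q_{r,r'}=P_{\tau(r)\tau(r')}$ if $t(r)=s(r')$, $0$ otherwise. A recurrent class is $C\subset R$ with $Q|_C$ irreducible and ($r\in C$, $Q_{r,r'}>0\Rightarrow r'\in C$). $\Sigma_C=\{(r_n)\in C^{\mathbb N_0}:Q_{r_nr_{n+1}}>0\}$, $\pi$ the stationary probability vector of $Q|_C$, $\mu_C$ the corresponding Markov measure on $\Sigma_C$. *)

theory Defs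
  imports "HOL-Probability.Probability"
begin

definition row_stochastic :: "('x::finite \<Rightarrow> 'x \<Rightarrow> real) \<Rightarrow> bool" where
  "row_stochastic P \<longleftrightarrow> (\<forall>i j. 0 \<le> P i j) \<and> (\<forall>i. (\<Sum>j\<in>UNIV. P i j) = 1)"

definition irreducible_on :: "'a set \<Rightarrow> ('a \<Rightarrow> 'a \<Rightarrow> real) \<Rightarrow> bool" where
  "irreducible_on I T \<longleftrightarrow> I \<noteq> {} \<and>
     (\<forall>i\<in>I. \<forall>j\<in>I. (i, j) \<in> {(a, b). a \<in> I \<and> b \<in> I \<and> 0 < T a b}\<^sup>+)"

definition stationary_prob :: "'a set \<Rightarrow> ('a \<Rightarrow> 'a \<Rightarrow> real) \<Rightarrow> ('a \<Rightarrow> real) \<Rightarrow> bool" where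
  "stationary_prob I T q \<longleftrightarrow> (\<forall>i\<in>I. 0 \<le> q i) \<and> (\<Sum>i\<in>I. q i) = 1 \<and>
     (\<forall>j\<in>I. q j = (\<Sum>i\<in>I. q i * T i j))"

definition shift_space :: "'a set \<Rightarrow> ('a \<Rightarrow> 'a \<Rightarrow> real) \<Rightarrow> (nat \<Rightarrow> 'a) set" where
  "shift_space I T = {x. \<forall>n. x n \<in> I \<and> 0 < T (x n) (x (Suc n))}"

definition shift_mspace :: "'a set \<Rightarrow> ('a \<Rightarrow> 'a \<Rightarrow> real) \<Rightarrow> (nat \<Rightarrow> 'a) measure" where
  "shift_mspace I T = restrict_space (PiM UNIV (\<lambda>_::nat. count_space UNIV)) (shift_space I T)"

definition cylinder :: "'a set \<Rightarrow> ('a \<Rightarrow> 'a \<Rightarrow> real) \<Rightarrow> 'a list \<Rightarrow> (nat \<Rightarrow> 'a) set" where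
  "cylinder I T w = {x \<in> shift_space I T. \<forall>k<length w. x k = w ! k}"

definition markov_measure ::
  "'a set \<Rightarrow> ('a \<Rightarrow> 'a \<Rightarrow> real) \<Rightarrow> ('a \<Rightarrow> real) \<Rightarrow> (nat \<Rightarrow> 'a) measure \<Rightarrow> bool" where
  "markov_measure I T q m \<longleftrightarrow> sets m = sets (shift_mspace I T) \<and>
     (\<forall>w. w \<noteq> [] \<and> set w \<subseteq> I \<longrightarrow>
        emeasure m (cylinder I T w) =
          ennreal (q (w ! 0) * (\<Prod>k<length w - 1. T (w ! k) (w ! Suc k))))"

text \<open>We model RP^1 as the unit circle in the complex plane: the line spanned by
  v = (cos t, sin t) corresponds to exp(2 i t).  The quotient map R^2 - {0} \<rightarrow> RP^1 is:\<close>
definition line_pt :: "real^2 \<Rightarrow> complex" where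
  "line_pt v = (Complex (v$1) (v$2))\<^sup>2 / (complex_of_real (norm v))\<^sup>2"

abbreviation RP1 :: "complex set" where
  "RP1 \<equiv> sphere 0 1"

definition rep :: "complex \<Rightarrow> real^2" where
  "rep z = (SOME v. v \<noteq> 0 \<and> line_pt v = z)"

definition projact :: "real^2^2 \<Rightarrow> complex \<Rightarrow> complex" where
  "projact A z = line_pt (A *v rep z)"

definition restr_norm :: "real^2^2 \<Rightarrow> complex \<Rightarrow> real" where
  "restr_norm A z = norm (A *v rep z) / norm (rep z)"

primrec mprod :: "('x \<Rightarrow> real^2^2) \<Rightarrow> 'x list \<Rightarrow> real^2^2" where
  "mprod A [] = mat 1"
| "mprod A (a # as) = mprod A as ** A a"

definition bi_shift_space :: "('x \<Rightarrow> 'x \<Rightarrow> real) \<Rightarrow> (int \<Rightarrow> 'x) set" where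
  "bi_shift_space P = {x. \<forall>n. 0 < P (x n) (x (n + 1))}"

definition bi_shift_top :: "('x \<Rightarrow> 'x \<Rightarrow> real) \<Rightarrow> (int \<Rightarrow> 'x) topology" where
  "bi_shift_top P = subtopology (product_topology (\<lambda>_::int. discrete_topology UNIV) UNIV)
                                (bi_shift_space P)"

definition proj_unif_hyp :: "('x \<Rightarrow> 'x \<Rightarrow> real) \<Rightarrow> ('x \<Rightarrow> real^2^2) \<Rightarrow> bool" where
  "proj_unif_hyp P A \<longleftrightarrow>
     (\<exists>Ed Ew :: (int \<Rightarrow> 'x) \<Rightarrow> complex. \<exists>n::nat.
        continuous_map (bi_shift_top P) euclidean Ed \<and>
        continuous_map (bi_shift_top P) euclidean Ew \<and>
        n \<ge> 1 \<and>
        (\<forall>x\<in>bi_shift_space P.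
           Ed x \<in> RP1 \<and> Ew x \<in> RP1 \<and> Ed x \<noteq> Ew x \<and>
           projact (A (x 0)) (Ed x) = Ed (\<lambda>k. x (k + 1)) \<and>
           projact (A (x 0)) (Ew x) = Ew (\<lambda>k. x (k + 1)) \<and>
           restr_norm (mprod A (map (\<lambda>k. x (int k)) [0..<n])) (Ew x)
             < restr_norm (mprod A (map (\<lambda>k. x (int k)) [0..<n])) (Ed x)))"

definition open_interval_RP1 :: "complex set \<Rightarrow> bool" where
  "open_interval_RP1 J \<longleftrightarrow> J \<noteq> {} \<and> J \<subset> RP1 \<and> connected J \<and> openin (top_of_set RP1) J"

definition multicone :: "('x \<Rightarrow> 'x \<Rightarrow> real) \<Rightarrow> ('x \<Rightarrow> real^2^2) \<Rightarrow> ('x \<Rightarrow> complex set) \<Rightarrow> bool" where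
  "multicone P A M \<longleftrightarrow>
     (\<forall>i. M i \<noteq> {} \<and> M i \<subset> RP1 \<and>
          (\<exists>F. finite F \<and> (\<forall>J\<in>F. open_interval_RP1 J) \<and> M i = \<Union>F)) \<and>
     (\<forall>i j. 0 < P i j \<longrightarrow> closure (projact (A j) ` M i) \<subseteq> M j)"

text \<open>Components M_(i,a) are represented by the components themselves (as sets);
  beta(i,a,j) is the unique component M_(j,b) containing [A_j](closure M_(i,a)).\<close>
definition beta :: "('x \<Rightarrow> real^2^2) \<Rightarrow> ('x \<Rightarrow> complex set) \<Rightarrow> 'x \<Rightarrow> complex set \<Rightarrow> 'x \<Rightarrow> complex set" where
  "beta A M i K j = (THE K'. K' \<in> components (M j) \<and> projact (A j) ` closure K \<subseteq> K')"

type_synonym 'x node = "'x \<times> complex set"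
type_synonym 'x edge = "'x node \<times> 'x node"

definition Redges :: "('x \<Rightarrow> 'x \<Rightarrow> real) \<Rightarrow> ('x \<Rightarrow> real^2^2) \<Rightarrow> ('x \<Rightarrow> complex set) \<Rightarrow> 'x edge set" where
  "Redges P A M = {((i, K), (j, K')). 0 < P i j \<and> K \<in> components (M i) \<and> K' = beta A M i K j}"

definition tau :: "'x edge \<Rightarrow> 'x" where
  "tau r = fst (snd r)"

definition Qmat :: "('x \<Rightarrow> 'x \<Rightarrow> real) \<Rightarrow> 'x edge \<Rightarrow> 'x edge \<Rightarrow> real" where
  "Qmat P r r' = (if snd r = fst r' then P (tau r) (tau r') else 0)"

definition recurrent_class ::
  "('x \<Rightarrow> 'x \<Rightarrow> real) \<Rightarrow> ('x \<Rightarrow> real^2^2) \<Rightarrow> ('x \<Rightarrow> complex set) \<Rightarrow> 'x edge set \<Rightarrow> bool" where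
  "recurrent_class P A M C \<longleftrightarrow> C \<subseteq> Redges P A M \<and> irreducible_on C (Qmat P) \<and>
     (\<forall>r\<in>C. \<forall>r'\<in>Redges P A M. 0 < Qmat P r r' \<longrightarrow> r' \<in> C)"

definition vartheta :: "(nat \<Rightarrow> 'x edge) \<Rightarrow> (nat \<Rightarrow> 'x)" where
  "vartheta r = (\<lambda>n. tau (r n))"

end

theory Submission
  imports Defs
begin

text \<open>
  An edge of R is determined by its source node and its label \<open>\<tau>\<close>, the target component being
  forced by \<open>\<beta>\<close>. Hence a Q-path in C is determined by its first edge and its labels, and since C
  is closed under admissible successors and, by irreducibility of P, meets every fibre of \<open>\<tau>\<close>,
  every P-admissible sequence lifts to C. The \<open>\<vartheta>\<close>-preimage of a cylinder
  \<open>[w\<^sub>0, \<dots>, w\<^sub>n]\<close> is therefore the disjoint union, over the edges r of C with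
  \<open>\<tau> r = w\<^sub>0\<close>, of the cylinders of the lifted words, and its \<open>\<mu>\<^sub>C\<close>-measure is
  \<open>q(w\<^sub>0) P(w\<^sub>0,w\<^sub>1) \<cdots> P(w\<^sub>n\<^sub>-\<^sub>1,w\<^sub>n)\<close> with \<open>q(j) = \<Sum>\<^bsub>\<tau> r = j\<^esub> \<pi>(r)\<close>.
  This q is P-stationary, so q = p by uniqueness of the stationary vector of an irreducible
  stochastic matrix. Cylinders form an \<inter>-stable generator of the \<sigma>-algebra, so
  \<open>\<vartheta>\<^sub>*\<mu>\<^sub>C = \<mu>\<close>.
\<close>

definition edge_succ :: "('x \<Rightarrow> real^2^2) \<Rightarrow> ('x \<Rightarrow> complex set) \<Rightarrow> 'x edge \<Rightarrow> 'x \<Rightarrow> 'x edge" where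
  "edge_succ A M r j = (snd r, (j, beta A M (fst (snd r)) (snd (snd r)) j))"

lemma tau_edge_succ [simp]: "tau (edge_succ A M r j) = j"
  and fst_edge_succ [simp]: "fst (edge_succ A M r j) = snd r"
  by (simp_all add: edge_succ_def tau_def)

lemma Qmat_edge_succ [simp]: "Qmat P r (edge_succ A M r j) = P (tau r) j"
  by (simp add: Qmat_def)

lemma Redges_eq_edge_succ:
  assumes "r \<in> Redges P A M" and "snd e = fst r"
  shows "r = edge_succ A M e (tau r)"
  using assms by (auto simp: Redges_def edge_succ_def tau_def)

lemma Qmat_pos_imp:
  assumes "0 < Qmat P r r'"
  shows "snd r = fst r'" and "0 < P (tau r) (tau r')"
  using assms by (auto simp: Qmat_def split: if_splits)

lemma recurrent_class_edge_succ:
  assumes rc: "recurrent_class P A M C" and r: "r \<in> C" and pos: "0 < P (tau r) j"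
  shows "edge_succ A M r j \<in> C"
proof -
  have sub: "C \<subseteq> Redges P A M"
    and closed: "\<And>r'. r' \<in> Redges P A M \<Longrightarrow> 0 < Qmat P r r' \<Longrightarrow> r' \<in> C"
    using rc r by (auto simp: recurrent_class_def)
  \<comment> \<open>Irreducibility of Q on C provides an edge leaving the target node of r, which is
    therefore a genuine node (i, K) with K a component of M i.\<close>
  have "(r, r) \<in> {(a, b). a \<in> C \<and> b \<in> C \<and> 0 < Qmat P a b}\<^sup>+"
    using rc r by (auto simp: recurrent_class_def irreducible_on_def)
  then obtain r1 where "r1 \<in> C" and "0 < Qmat P r r1"
    by (metis (no_types, lifting) case_prodD converse_tranclE mem_Collect_eq)
  then have "snd r = fst r1" and "r1 \<in> Redges P A M"
    using sub Qmat_pos_imp(1)[of P r r1] by auto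
  then obtain i K where "snd r = (i, K)" and "K \<in> components (M i)"
    by (auto simp: Redges_def)
  then have "edge_succ A M r j \<in> Redges P A M"
    using pos by (simp add: Redges_def edge_succ_def tau_def)
  then show ?thesis
    using closed pos by simp
qed

lemma irreducible_on_UNIV_closed_eq_UNIV:
  assumes irr: "irreducible_on UNIV P" and "i \<in> S"
    and closed: "\<And>i j. i \<in> S \<Longrightarrow> 0 < P i j \<Longrightarrow> j \<in> S"
  shows "S = UNIV"
proof -
  have "j \<in> S" for j
  proof -
    have "(i, j) \<in> {(a, b). a \<in> UNIV \<and> b \<in> UNIV \<and> 0 < P a b}\<^sup>+"
      using irr by (simp add: irreducible_on_def)
    then show ?thesis
      by (induction rule: trancl_induct) (use \<open>i \<in> S\<close> closed in auto)
  qed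
  then show ?thesis by blast
qed

lemma recurrent_class_tau_surj:
  assumes rc: "recurrent_class P A M C" and irr: "irreducible_on UNIV P"
  shows "tau ` C = UNIV"
proof -
  obtain r where "r \<in> C"
    using rc by (auto simp: recurrent_class_def irreducible_on_def)
  show ?thesis
  proof (rule irreducible_on_UNIV_closed_eq_UNIV[OF irr])
    show "tau r \<in> tau ` C" using \<open>r \<in> C\<close> by blast
    fix i j assume "i \<in> tau ` C" and "0 < P i j"
    then show "j \<in> tau ` C"
      using recurrent_class_edge_succ[OF rc] by (metis imageE image_eqI tau_edge_succ)
  qed
qed

primrec edge_path :: "('x \<Rightarrow> real^2^2) \<Rightarrow> ('x \<Rightarrow> complex set) \<Rightarrow> 'x edge \<Rightarrow> (nat \<Rightarrow> 'x) \<Rightarrow> nat \<Rightarrow> 'x edge" where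
  "edge_path A M u x 0 = u"
| "edge_path A M u x (Suc k) = edge_succ A M (edge_path A M u x k) (x (Suc k))"

lemma edge_path_in_recurrent_class:
  assumes rc: "recurrent_class P A M C" and u: "u \<in> C" "tau u = x 0"
    and adm: "\<And>k. k < n \<Longrightarrow> 0 < P (x k) (x (Suc k))"
    and "k \<le> n"
  shows "edge_path A M u x k \<in> C \<and> tau (edge_path A M u x k) = x k"
  using \<open>k \<le> n\<close>
proof (induction k)
  case 0
  then show ?case using u by simp
next
  case (Suc k)
  then show ?case using recurrent_class_edge_succ[OF rc] adm by simp
qed

lemma edge_path_cong:
  assumes "\<And>i. i \<le> k \<Longrightarrow> x i = y i"
  shows "edge_path A M u x k = edge_path A M u y k"
  using assms by (induction k) simp_all

lemma shift_space_recurrent_class_eq_edge_path: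
  assumes rc: "recurrent_class P A M C" and x: "x \<in> shift_space C (Qmat P)"
  shows "x k = edge_path A M (x 0) (vartheta x) k"
proof (induction k)
  case 0
  then show ?case by simp
next
  case (Suc k)
  have "x (Suc k) \<in> Redges P A M" and "0 < Qmat P (x k) (x (Suc k))"
    using x rc by (auto simp: shift_space_def recurrent_class_def)
  then have "x (Suc k) = edge_succ A M (x k) (tau (x (Suc k)))"
    using Redges_eq_edge_succ Qmat_pos_imp(1) by blast
  then show ?case using Suc by (simp add: vartheta_def)
qed

lemma vartheta_shift_space:
  assumes "x \<in> shift_space C (Qmat P)"
  shows "vartheta x \<in> shift_space UNIV P"
  using assms by (auto simp: shift_space_def vartheta_def intro: Qmat_pos_imp(2))

lemma vartheta_image_shift_space:
  assumes rc: "recurrent_class P A M C" and irr: "irreducible_on UNIV P"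
  shows "vartheta ` shift_space C (Qmat P) = shift_space UNIV P"
proof
  show "vartheta ` shift_space C (Qmat P) \<subseteq> shift_space UNIV P"
    using vartheta_shift_space by blast
next
  show "shift_space UNIV P \<subseteq> vartheta ` shift_space C (Qmat P)"
  proof
    fix x assume x: "x \<in> shift_space UNIV P"
    obtain u where u: "u \<in> C" "tau u = x 0"
      using recurrent_class_tau_surj[OF rc irr] by (metis UNIV_I imageE)
    let ?y = "edge_path A M u x"
    have y: "?y k \<in> C \<and> tau (?y k) = x k" for k
      using x by (intro edge_path_in_recurrent_class[where x=x and n=k, OF rc u]) (auto simp: shift_space_def)
    have "?y \<in> shift_space C (Qmat P)"
      using y x by (auto simp: shift_space_def Qmat_def)
    moreover have "vartheta ?y = x"
      using y by (auto simp: vartheta_def)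
    ultimately show "x \<in> vartheta ` shift_space C (Qmat P)" by (metis image_eqI)
  qed
qed

lemma stationary_prob_nonneg:
  assumes "stationary_prob I T q" and "i \<in> I"
  shows "0 \<le> q i"
  using assms unfolding stationary_prob_def by blast

lemma stationary_prob_finite:
  assumes "stationary_prob I T q"
  shows "finite I"
  using assms by (metis stationary_prob_def sum.infinite zero_neq_one)

lemma invariant_positive_set_closed:
  fixes P :: "'x::finite \<Rightarrow> 'x \<Rightarrow> real" and d :: "'x \<Rightarrow> real"
  assumes rs: "row_stochastic P" and inv: "\<And>j. d j = (\<Sum>i\<in>UNIV. d i * P i j)"
    and "0 < d i" and "0 < P i j"
  shows "0 < d j"
proof (rule ccontr)
  assume "\<not> 0 < d j"
  define S where "S = {i. 0 < d i}"
  define PS where "PS i = (\<Sum>j\<in>S. P i j)" for i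
  have Pnn: "\<And>i j. 0 \<le> P i j" and Psum: "\<And>i. (\<Sum>j\<in>UNIV. P i j) = 1"
    using rs by (auto simp: row_stochastic_def)
  have PS_split: "PS i + (\<Sum>j\<in>-S. P i j) = 1" for i
    using Psum[of i] sum.union_disjoint[of S "-S" "P i"] by (simp add: PS_def Un_commute)
  have PS_nonneg: "0 \<le> PS i" for i
    unfolding PS_def by (intro sum_nonneg) (simp add: Pnn)
  \<comment> \<open>As d is nonpositive off S, invariance gives \<open>\<Sum>\<^bsub>S\<^esub> d \<le> \<Sum>\<^bsub>i\<in>S\<^esub> d i \<cdot> PS i\<close>,
    which forces \<open>PS i = 1\<close> on S: no mass leaves S.\<close>
  have "(\<Sum>j\<in>S. d j) = (\<Sum>i\<in>UNIV. d i * PS i)"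
    unfolding PS_def by (subst inv) (simp add: sum.swap[of _ S] sum_distrib_left)
  also have "\<dots> \<le> (\<Sum>i\<in>UNIV. if i \<in> S then d i * PS i else 0)"
    by (intro sum_mono) (auto simp: S_def PS_nonneg mult_nonpos_nonneg)
  also have "\<dots> = (\<Sum>i\<in>S. d i * PS i)"
    by (simp add: sum.If_cases)
  finally have "(\<Sum>i\<in>S. d i * (1 - PS i)) \<le> 0"
    by (simp add: right_diff_distrib sum_subtractf)
  moreover have nonneg: "\<forall>i\<in>S. 0 \<le> d i * (1 - PS i)"
  proof
    fix i assume "i \<in> S"
    have "0 \<le> (\<Sum>j\<in>-S. P i j)" by (intro sum_nonneg) (simp add: Pnn)
    then show "0 \<le> d i * (1 - PS i)" using PS_split[of i] \<open>i \<in> S\<close> by (simp add: S_def)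
  qed
  ultimately have "(\<Sum>i\<in>S. d i * (1 - PS i)) = 0"
    by (meson antisym sum_nonneg)
  then have "\<forall>i\<in>S. d i * (1 - PS i) = 0"
    using nonneg by (simp add: sum_nonneg_eq_0_iff)
  then have "d i * (1 - PS i) = 0"
    using \<open>0 < d i\<close> by (simp add: S_def)
  then have "(\<Sum>k\<in>-S. P i k) = 0"
    using PS_split[of i] \<open>0 < d i\<close> by simp
  then have "P i j = 0"
    using \<open>\<not> 0 < d j\<close> by (simp add: sum_nonneg_eq_0_iff Pnn S_def)
  then show False using \<open>0 < P i j\<close> by simp
qed

lemma invariant_zero_sum_nonpos:
  fixes P :: "'x::finite \<Rightarrow> 'x \<Rightarrow> real" and d :: "'x \<Rightarrow> real"
  assumes rs: "row_stochastic P" and irr: "irreducible_on UNIV P"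
    and inv: "\<And>j. d j = (\<Sum>i\<in>UNIV. d i * P i j)" and sum0: "(\<Sum>i\<in>UNIV. d i) = 0"
  shows "d i \<le> 0"
proof (rule ccontr)
  assume "\<not> d i \<le> 0"
  then have "{i. 0 < d i} = UNIV"
    using invariant_positive_set_closed[OF rs inv]
    by (intro irreducible_on_UNIV_closed_eq_UNIV[OF irr, of i]) auto
  then have "0 < (\<Sum>i\<in>UNIV. d i)"
    by (intro sum_pos) auto
  then show False using sum0 by simp
qed

lemma stationary_prob_unique:
  fixes P :: "'x::finite \<Rightarrow> 'x \<Rightarrow> real"
  assumes rs: "row_stochastic P" and irr: "irreducible_on UNIV P"
    and p: "stationary_prob UNIV P p" and q: "stationary_prob UNIV P q"
  shows "p = q"
proof -
  have le: "p' i - q' i \<le> 0"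
    if "stationary_prob UNIV P p'" "stationary_prob UNIV P q'" for p' q' :: "'x \<Rightarrow> real" and i
  proof (rule invariant_zero_sum_nonpos[OF rs irr])
    have inv: "p' j = (\<Sum>i\<in>UNIV. p' i * P i j)" "q' j = (\<Sum>i\<in>UNIV. q' i * P i j)" for j
      using that unfolding stationary_prob_def by blast+
    have sum1: "(\<Sum>i\<in>UNIV. p' i) = 1" "(\<Sum>i\<in>UNIV. q' i) = 1"
      using that unfolding stationary_prob_def by blast+
    show "p' j - q' j = (\<Sum>i\<in>UNIV. (p' i - q' i) * P i j)" for j
      unfolding left_diff_distrib sum_subtractf using inv[of j] by linarith
    show "(\<Sum>i\<in>UNIV. p' i - q' i) = 0"
      unfolding sum_subtractf using sum1 by linarith
  qed
  show ?thesis
  proof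
    fix i
    show "p i = q i" using le[OF p q, of i] le[OF q p, of i] by linarith
  qed
qed

lemma Qmat_fiber_sum:
  assumes rs: "row_stochastic P" and rc: "recurrent_class P A M C"
    and fin: "finite C" and r: "r \<in> C"
  shows "(\<Sum>r'\<in>{r'\<in>C. tau r' = j}. Qmat P r r') = P (tau r) j"
proof -
  let ?s = "edge_succ A M r j"
  have "Qmat P r r' = (if r' = ?s then P (tau r) j else 0)" if "r' \<in> C" "tau r' = j" for r'
  proof (cases "snd r = fst r'")
    case True
    have "r' \<in> Redges P A M" using that rc by (auto simp: recurrent_class_def)
    then have "r' = ?s" using Redges_eq_edge_succ[OF _ True] that(2) by simp
    then show ?thesis by simp
  next
    case False
    then have "r' \<noteq> ?s" by auto
    then show ?thesis using False by (simp add: Qmat_def)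
  qed
  then have "(\<Sum>r'\<in>{r'\<in>C. tau r' = j}. Qmat P r r')
      = (\<Sum>r'\<in>{r'\<in>C. tau r' = j}. if r' = ?s then P (tau r) j else 0)"
    by (intro sum.cong) auto
  also have "\<dots> = (if ?s \<in> C then P (tau r) j else 0)"
    using fin by (simp add: sum.delta)
  also have "\<dots> = P (tau r) j"
  proof -
    have "0 \<le> P (tau r) j" using rs by (simp add: row_stochastic_def)
    then show ?thesis using recurrent_class_edge_succ[OF rc r, of j] by force
  qed
  finally show ?thesis .
qed

lemma stationary_prob_fiber_sum:
  fixes P :: "'x::finite \<Rightarrow> 'x \<Rightarrow> real"
  assumes rs: "row_stochastic P" and rc: "recurrent_class P A M C"
    and q: "stationary_prob C (Qmat P) q"
  shows "stationary_prob UNIV P (\<lambda>j. \<Sum>r\<in>{r\<in>C. tau r = j}. q r)"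
proof -
  have sum1: "(\<Sum>r\<in>C. q r) = 1"
    and inv: "\<And>r'. r' \<in> C \<Longrightarrow> q r' = (\<Sum>r\<in>C. q r * Qmat P r r')"
    using q unfolding stationary_prob_def by blast+
  have fin: "finite C"
    using q by (rule stationary_prob_finite)
  have group: "(\<Sum>j\<in>UNIV. \<Sum>r\<in>{r\<in>C. tau r = j}. h r) = (\<Sum>r\<in>C. h r)" for h :: "'x edge \<Rightarrow> real"
    by (rule sum.group) (use fin in auto)
  have "(\<Sum>r'\<in>{r\<in>C. tau r = j}. q r') = (\<Sum>i\<in>UNIV. (\<Sum>r\<in>{r\<in>C. tau r = i}. q r) * P i j)" for j
  proof -
    have "(\<Sum>r'\<in>{r\<in>C. tau r = j}. q r') = (\<Sum>r'\<in>{r\<in>C. tau r = j}. \<Sum>r\<in>C. q r * Qmat P r r')"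
      by (rule sum.cong) (auto intro: inv)
    also have "\<dots> = (\<Sum>r\<in>C. q r * (\<Sum>r'\<in>{r\<in>C. tau r = j}. Qmat P r r'))"
      by (subst sum.swap) (simp add: sum_distrib_left)
    also have "\<dots> = (\<Sum>r\<in>C. q r * P (tau r) j)"
      using Qmat_fiber_sum[OF rs rc fin] by simp
    also have "\<dots> = (\<Sum>i\<in>UNIV. (\<Sum>r\<in>{r\<in>C. tau r = i}. q r) * P i j)"
      by (simp add: group[symmetric] sum_distrib_right)
    finally show ?thesis .
  qed
  moreover have "(\<Sum>j\<in>UNIV. \<Sum>r\<in>{r\<in>C. tau r = j}. q r) = 1"
    using group sum1 by simp
  moreover have "0 \<le> (\<Sum>r\<in>{r\<in>C. tau r = j}. q r)" for j
    using stationary_prob_nonneg[OF q] by (intro sum_nonneg) simp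
  ultimately show ?thesis
    unfolding stationary_prob_def by blast
qed

abbreviation seq_space :: "(nat \<Rightarrow> 'a) measure" where
  "seq_space \<equiv> PiM UNIV (\<lambda>_. count_space UNIV)"

lemma space_seq_space [simp]: "space seq_space = UNIV"
  by (simp add: space_PiM)

lemma space_shift_mspace [simp]: "space (shift_mspace I T) = shift_space I T"
  by (simp add: shift_mspace_def space_restrict_space)

lemma shift_space_in_sets:
  fixes T :: "'x::finite \<Rightarrow> 'x \<Rightarrow> real"
  shows "shift_space I T \<in> sets seq_space"
proof -
  have "shift_space I T = {x \<in> space seq_space. \<forall>n. x n \<in> I \<and> 0 < T (x n) (x (Suc n))}"
    by (simp add: shift_space_def)
  also have "\<dots> \<in> sets seq_space"
    by measurable
  finally show ?thesis .
qed

lemma cylinder_in_sets: "cylinder I T w \<in> sets (shift_mspace I T)"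
proof -
  have "{x \<in> space seq_space. \<forall>k<length w. x k = w ! k} \<in> sets seq_space"
    by measurable
  moreover have "cylinder I T w = shift_space I T \<inter> {x \<in> space seq_space. \<forall>k<length w. x k = w ! k}"
    by (auto simp: cylinder_def)
  ultimately show ?thesis
    unfolding shift_mspace_def sets_restrict_space by blast
qed

lemma cylinder_Nil [simp]: "cylinder I T [] = shift_space I T"
  by (simp add: cylinder_def)

lemma cylinder_Int_cylinder:
  assumes "length u \<le> length v"
  shows "cylinder I T u \<inter> cylinder I T v = (if \<forall>k<length u. u ! k = v ! k then cylinder I T v else {})"
  using assms by (auto simp: cylinder_def)

lemma Int_stable_cylinders: "Int_stable (range (cylinder I T) \<union> {{}})"
proof (rule Int_stableI)
  have "cylinder I T u \<inter> cylinder I T v \<in> range (cylinder I T) \<union> {{}}" for u v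
    using cylinder_Int_cylinder[of u v I T] cylinder_Int_cylinder[of v u I T]
    by (cases "length u \<le> length v") (auto simp: Int_commute)
  then show "a \<inter> b \<in> range (cylinder I T) \<union> {{}}"
    if "a \<in> range (cylinder I T) \<union> {{}}" and "b \<in> range (cylinder I T) \<union> {{}}" for a b
    using that by auto
qed

lemma sets_shift_mspace_cylinders:
  fixes T :: "'x::finite \<Rightarrow> 'x \<Rightarrow> real"
  shows "sets (shift_mspace I T) = sigma_sets (shift_space I T) (range (cylinder I T) \<union> {{}})"
proof -
  define \<Omega> where "\<Omega> = shift_space I T"
  define G where "G = {{f :: nat \<Rightarrow> 'x. f i \<in> X} | i X. True}"
  have sets_seq: "sets (seq_space :: (nat \<Rightarrow> 'x) measure) = sigma_sets UNIV G"
    unfolding sets_PiM_single G_def by (simp add: space_PiM)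
  have sets_eq: "sets (shift_mspace I T) = sigma_sets \<Omega> ((\<inter>) \<Omega> ` G)"
    unfolding shift_mspace_def sets_restrict_space sets_seq \<Omega>_def
    by (rule sigma_sets_Int) (use shift_space_in_sets[of I T] sets_seq in auto)
  have "range (cylinder I T) \<union> {{}} \<subseteq> Pow \<Omega>"
    by (auto simp: \<Omega>_def cylinder_def)
  then interpret sigma_algebra \<Omega> "sigma_sets \<Omega> (range (cylinder I T) \<union> {{}})"
    by (rule sigma_algebra_sigma_sets)
  \<comment> \<open>Over a finite alphabet, a coordinate event \<open>{f. f i \<in> X}\<close> is a finite union of cylinders.\<close>
  have "sigma_sets \<Omega> ((\<inter>) \<Omega> ` G) = sigma_sets \<Omega> (range (cylinder I T) \<union> {{}})"
  proof (rule sigma_sets_eqI)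
    fix a assume "a \<in> (\<inter>) \<Omega> ` G"
    then obtain i X where a: "a = \<Omega> \<inter> {f. f i \<in> X}" by (auto simp: G_def)
    define W where "W = {w :: 'x list. length w = Suc i \<and> w ! i \<in> X}"
    have "finite W"
      by (rule finite_subset[OF _ finite_lists_length_eq[of UNIV "Suc i"]]) (auto simp: W_def)
    have "a = (\<Union>w\<in>W. cylinder I T w)"
    proof (intro equalityI subsetI)
      fix x assume "x \<in> a"
      then have "x \<in> cylinder I T (map x [0..<Suc i])" and "map x [0..<Suc i] \<in> W"
        by (auto simp: a cylinder_def \<Omega>_def W_def simp del: upt_Suc)
      then show "x \<in> (\<Union>w\<in>W. cylinder I T w)" by blast
    qed (auto simp: a cylinder_def \<Omega>_def W_def)
    also have "\<dots> \<in> sigma_sets \<Omega> (range (cylinder I T) \<union> {{}})"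
      using \<open>finite W\<close> by (intro finite_UN) auto
    finally show "a \<in> sigma_sets \<Omega> (range (cylinder I T) \<union> {{}})" .
  next
    fix b assume "b \<in> range (cylinder I T) \<union> {{}}"
    then show "b \<in> sigma_sets \<Omega> ((\<inter>) \<Omega> ` G)"
      using cylinder_in_sets[of I T] sets_eq by (auto intro: sigma_sets.Empty)
  qed
  then show ?thesis
    using sets_eq by (simp add: \<Omega>_def)
qed

lemma emeasure_shift_space_eq_sum:
  fixes T :: "'x::finite \<Rightarrow> 'x \<Rightarrow> real"
  assumes "sets m = sets (shift_mspace I T)"
  shows "emeasure m (shift_space I T) = (\<Sum>j\<in>UNIV. emeasure m (cylinder I T [j]))"
proof -
  have "shift_space I T = (\<Union>j. cylinder I T [j])"
    by (auto simp: cylinder_def)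
  moreover have "disjoint_family (\<lambda>j. cylinder I T [j])"
    by (auto simp: disjoint_family_on_def cylinder_def)
  ultimately show ?thesis
    using assms cylinder_in_sets[of I T] by (simp add: sum_emeasure image_subset_iff)
qed

lemma shift_measure_eqI:
  fixes T :: "'x::finite \<Rightarrow> 'x \<Rightarrow> real"
  assumes sets_m: "sets m = sets (shift_mspace I T)" and sets_n: "sets n = sets (shift_mspace I T)"
    and cyl: "\<And>w. w \<noteq> [] \<Longrightarrow> emeasure m (cylinder I T w) = emeasure n (cylinder I T w)"
    and fin: "emeasure m (shift_space I T) \<noteq> \<infinity>"
  shows "m = n"
proof (rule measure_eqI_generator_eq[OF Int_stable_cylinders[of I T] _ _ _ _ _ _ fin])
  show "range (cylinder I T) \<union> {{}} \<subseteq> Pow (shift_space I T)"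
    by (auto simp: cylinder_def)
  show "sets m = sigma_sets (shift_space I T) (range (cylinder I T) \<union> {{}})"
    and "sets n = sigma_sets (shift_space I T) (range (cylinder I T) \<union> {{}})"
    using sets_m sets_n by (simp_all add: sets_shift_mspace_cylinders)
  show "range (\<lambda>_. shift_space I T) \<subseteq> range (cylinder I T) \<union> {{}}"
    by (auto intro: range_eqI[of _ _ "[]"])
  show "(\<Union>_::nat. shift_space I T) = shift_space I T" by simp
  have "emeasure m (shift_space I T) = emeasure n (shift_space I T)"
    using emeasure_shift_space_eq_sum[OF sets_m] emeasure_shift_space_eq_sum[OF sets_n] cyl by simp
  then have "emeasure m (cylinder I T w) = emeasure n (cylinder I T w)" for w
    using cyl by (cases "w = []") simp_all
  then show "emeasure m X = emeasure n X" if "X \<in> range (cylinder I T) \<union> {{}}" for X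
    using that by auto
qed

lemma markov_measure_shift_space_finite:
  fixes T :: "'x::finite \<Rightarrow> 'x \<Rightarrow> real"
  assumes "markov_measure I T q m"
  shows "emeasure m (shift_space I T) \<noteq> \<infinity>"
proof -
  have "emeasure m (cylinder I T [j]) \<noteq> \<infinity>" for j
  proof (cases "j \<in> I")
    case False
    then have "cylinder I T [j] = {}" by (auto simp: cylinder_def shift_space_def)
    then show ?thesis by simp
  qed (use assms in \<open>simp add: markov_measure_def\<close>)
  then show ?thesis
    using assms by (simp add: markov_measure_def emeasure_shift_space_eq_sum)
qed

lemma cylinder_nonempty_imp_admissible:
  assumes "cylinder I T w \<noteq> {}" and "Suc k < length w"
  shows "0 < T (w ! k) (w ! Suc k)"
proof -
  obtain x where x: "x \<in> cylinder I T w" using assms(1) by blast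
  then have "x k = w ! k" and "x (Suc k) = w ! Suc k"
    using assms(2) by (auto simp: cylinder_def)
  moreover have "0 < T (x k) (x (Suc k))"
    using x by (simp add: cylinder_def shift_space_def)
  ultimately show ?thesis by simp
qed

lemma measurable_vartheta:
  assumes "vartheta ` shift_space I T \<subseteq> shift_space J S"
  shows "vartheta \<in> measurable (shift_mspace I T) (shift_mspace J S)"
  unfolding shift_mspace_def
proof (rule measurable_restrict_space3)
  show "vartheta \<in> shift_space I T \<rightarrow> shift_space J S"
    using assms by blast
  have "(\<lambda>r n. tau (r n)) \<in> measurable seq_space seq_space"
    by (rule measurable_PiM_single') (auto intro!: measurable_compose[OF measurable_component_singleton])
  then show "vartheta \<in> measurable seq_space seq_space"
    by (simp add: vartheta_def[abs_def])
qed

definition lift_word :: "('x \<Rightarrow> real^2^2) \<Rightarrow> ('x \<Rightarrow> complex set) \<Rightarrow> 'x edge \<Rightarrow> 'x list \<Rightarrow> 'x edge list" where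
  "lift_word A M u w = map (edge_path A M u ((!) w)) [0..<length w]"

lemma length_lift_word [simp]: "length (lift_word A M u w) = length w"
  by (simp add: lift_word_def)

lemma nth_lift_word [simp]: "k < length w \<Longrightarrow> lift_word A M u w ! k = edge_path A M u ((!) w) k"
  by (simp add: lift_word_def del: upt_Suc)

lemma lift_word_in_recurrent_class:
  assumes rc: "recurrent_class P A M C" and u: "u \<in> C" "tau u = w ! 0"
    and adm: "\<And>k. Suc k < length w \<Longrightarrow> 0 < P (w ! k) (w ! Suc k)" and k: "k < length w"
  shows "lift_word A M u w ! k \<in> C \<and> tau (lift_word A M u w ! k) = w ! k"
  using edge_path_in_recurrent_class[where x="(!) w" and n="length w - 1", OF rc u] adm k by simp

lemma vartheta_preimage_cylinder:
  assumes rc: "recurrent_class P A M C"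
    and adm: "\<And>k. Suc k < length w \<Longrightarrow> 0 < P (w ! k) (w ! Suc k)" and w: "w \<noteq> []"
  shows "vartheta -` cylinder UNIV P w \<inter> shift_space C (Qmat P)
    = (\<Union>u\<in>{r\<in>C. tau r = w ! 0}. cylinder C (Qmat P) (lift_word A M u w))"
proof (intro equalityI subsetI)
  fix x assume x: "x \<in> vartheta -` cylinder UNIV P w \<inter> shift_space C (Qmat P)"
  then have xC: "x \<in> shift_space C (Qmat P)" and labels: "\<And>k. k < length w \<Longrightarrow> vartheta x k = w ! k"
    by (auto simp: cylinder_def)
  have "x k = lift_word A M (x 0) w ! k" if "k < length w" for k
    using shift_space_recurrent_class_eq_edge_path[OF rc xC, of k] edge_path_cong[of k "vartheta x" "(!) w"]
      labels that by simp
  then have "x \<in> cylinder C (Qmat P) (lift_word A M (x 0) w)"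
    using xC by (simp add: cylinder_def)
  moreover have "x 0 \<in> C" and "tau (x 0) = w ! 0"
    using xC labels[of 0] w by (auto simp: shift_space_def vartheta_def)
  ultimately show "x \<in> (\<Union>u\<in>{r\<in>C. tau r = w ! 0}. cylinder C (Qmat P) (lift_word A M u w))"
    by blast
next
  fix x assume "x \<in> (\<Union>u\<in>{r\<in>C. tau r = w ! 0}. cylinder C (Qmat P) (lift_word A M u w))"
  then obtain u where u: "u \<in> C" "tau u = w ! 0"
    and xC: "x \<in> shift_space C (Qmat P)" and xk: "\<And>k. k < length w \<Longrightarrow> x k = lift_word A M u w ! k"
    by (auto simp: cylinder_def)
  have "vartheta x k = w ! k" if "k < length w" for k
    using xk[OF that] lift_word_in_recurrent_class[OF rc u adm that] by (simp add: vartheta_def)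
  then show "x \<in> vartheta -` cylinder UNIV P w \<inter> shift_space C (Qmat P)"
    using xC vartheta_shift_space[OF xC] by (auto simp: cylinder_def)
qed

lemma emeasure_cylinder_lift_word:
  assumes muC: "markov_measure C (Qmat P) q muC" and rc: "recurrent_class P A M C"
    and u: "u \<in> C" "tau u = w ! 0"
    and adm: "\<And>k. Suc k < length w \<Longrightarrow> 0 < P (w ! k) (w ! Suc k)" and w: "w \<noteq> []"
  shows "emeasure muC (cylinder C (Qmat P) (lift_word A M u w))
     = ennreal (q u * (\<Prod>k<length w - 1. P (w ! k) (w ! Suc k)))"
proof -
  let ?v = "lift_word A M u w"
  have v: "?v ! k \<in> C \<and> tau (?v ! k) = w ! k" if "k < length w" for k
    using lift_word_in_recurrent_class[OF rc u adm that] .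
  have "set ?v \<subseteq> C"
    using v by (metis in_set_conv_nth length_lift_word subsetI)
  moreover have "?v \<noteq> []"
    using w by (metis length_0_conv length_lift_word)
  ultimately
  have "emeasure muC (cylinder C (Qmat P) ?v)
      = ennreal (q (?v ! 0) * (\<Prod>k<length w - 1. Qmat P (?v ! k) (?v ! Suc k)))"
    using muC by (simp add: markov_measure_def)
  also have "(\<Prod>k<length w - 1. Qmat P (?v ! k) (?v ! Suc k)) = (\<Prod>k<length w - 1. P (w ! k) (w ! Suc k))"
    using v by (intro prod.cong) (simp_all add: Qmat_def)
  also have "?v ! 0 = u"
    using w by simp
  finally show ?thesis .
qed

lemma emeasure_distr_vartheta_cylinder:
  assumes muC: "markov_measure C (Qmat P) q muC" and rc: "recurrent_class P A M C"
    and q: "stationary_prob C (Qmat P) q" and sets_N: "sets N = sets (shift_mspace UNIV P)"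
    and nonempty: "cylinder UNIV P w \<noteq> {}" and w: "w \<noteq> []"
  shows "emeasure (distr muC N vartheta) (cylinder UNIV P w)
     = ennreal ((\<Sum>r\<in>{r\<in>C. tau r = w ! 0}. q r) * (\<Prod>k<length w - 1. P (w ! k) (w ! Suc k)))"
proof -
  have adm: "\<And>k. Suc k < length w \<Longrightarrow> 0 < P (w ! k) (w ! Suc k)"
    using nonempty by (rule cylinder_nonempty_imp_admissible)
  let ?U = "{r\<in>C. tau r = w ! 0}" and ?pr = "\<Prod>k<length w - 1. P (w ! k) (w ! Suc k)"
  have sets_muC: "sets muC = sets (shift_mspace C (Qmat P))"
    using muC by (simp add: markov_measure_def)
  have "finite ?U"
    using stationary_prob_finite[OF q] by simp
  have disj: "disjoint_family_on (\<lambda>u. cylinder C (Qmat P) (lift_word A M u w)) ?U"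
    using w by (auto simp: disjoint_family_on_def cylinder_def)
  have "vartheta \<in> measurable muC N"
    using measurable_vartheta[of C "Qmat P" UNIV P] vartheta_shift_space
    by (auto simp: measurable_cong_sets[OF sets_muC sets_N])
  moreover have "cylinder UNIV P w \<in> sets N"
    using cylinder_in_sets sets_N by blast
  ultimately have "emeasure (distr muC N vartheta) (cylinder UNIV P w)
      = emeasure muC (vartheta -` cylinder UNIV P w \<inter> shift_space C (Qmat P))"
    using sets_eq_imp_space_eq[OF sets_muC] by (simp add: emeasure_distr)
  also have "\<dots> = emeasure muC (\<Union>u\<in>?U. cylinder C (Qmat P) (lift_word A M u w))"
    by (simp only: vartheta_preimage_cylinder[OF rc adm w])
  also have "\<dots> = (\<Sum>u\<in>?U. emeasure muC (cylinder C (Qmat P) (lift_word A M u w)))"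
    using \<open>finite ?U\<close> disj cylinder_in_sets sets_muC by (intro sum_emeasure[symmetric]) auto
  also have "\<dots> = (\<Sum>u\<in>?U. ennreal (q u * ?pr))"
    using emeasure_cylinder_lift_word[OF muC rc _ _ adm w] by simp
  also have "\<dots> = ennreal (\<Sum>u\<in>?U. q u * ?pr)"
  proof (rule sum_ennreal)
    have "0 \<le> ?pr" using adm by (intro prod_nonneg) (simp add: less_imp_le)
    then show "0 \<le> q u * ?pr" if "u \<in> ?U" for u
      using q that by (simp add: stationary_prob_nonneg mult_nonneg_nonneg)
  qed
  finally show ?thesis
    by (simp add: sum_distrib_right)
qed

theorem proposition3p2:
  fixes P :: "'x::finite \<Rightarrow> 'x \<Rightarrow> real"
    and p :: "'x \<Rightarrow> real"
    and mu :: "(nat \<Rightarrow> 'x) measure"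
    and A :: "'x \<Rightarrow> real^2^2"
    and M :: "'x \<Rightarrow> complex set"
    and C :: "'x edge set"
    and pi :: "'x edge \<Rightarrow> real"
    and muC :: "(nat \<Rightarrow> 'x edge) measure"
  assumes "row_stochastic P"
    and "irreducible_on UNIV P"
    and "stationary_prob UNIV P p"
    and "markov_measure UNIV P p mu"
    and "\<forall>i. invertible (A i)"
    and "proj_unif_hyp P A"
    and "multicone P A M"
    and "recurrent_class P A M C"
    and "stationary_prob C (Qmat P) pi"
    and "markov_measure C (Qmat P) pi muC"
  shows "vartheta ` shift_space C (Qmat P) = shift_space UNIV P
       \<and> vartheta \<in> measurable muC mu
       \<and> distr muC mu vartheta = mu"
proof -
  note rs = assms(1) and irr = assms(2) and p = assms(3) and mu = assms(4)
    and rc = assms(8) and pi = assms(9) and muC = assms(10)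
  have surj: "vartheta ` shift_space C (Qmat P) = shift_space UNIV P"
    by (rule vartheta_image_shift_space[OF rc irr])
  have sets_mu: "sets mu = sets (shift_mspace UNIV P)"
    and sets_muC: "sets muC = sets (shift_mspace C (Qmat P))"
    using mu muC by (simp_all add: markov_measure_def)
  have meas: "vartheta \<in> measurable muC mu"
    using measurable_vartheta[of C "Qmat P" UNIV P] surj
    by (simp add: measurable_cong_sets[OF sets_muC sets_mu])
  have p_eq: "p = (\<lambda>j. \<Sum>r\<in>{r\<in>C. tau r = j}. pi r)"
    by (rule stationary_prob_unique[OF rs irr p stationary_prob_fiber_sum[OF rs rc pi]])
  have "distr muC mu vartheta = mu"
  proof (rule shift_measure_eqI[symmetric, OF sets_mu _ _ markov_measure_shift_space_finite[OF mu]])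
    show "sets (distr muC mu vartheta) = sets (shift_mspace UNIV P)"
      using sets_mu by simp
    fix w :: "'x list" assume "w \<noteq> []"
    then show "emeasure mu (cylinder UNIV P w) = emeasure (distr muC mu vartheta) (cylinder UNIV P w)"
      using emeasure_distr_vartheta_cylinder[OF muC rc pi sets_mu _ \<open>w \<noteq> []\<close>] mu
      by (cases "cylinder UNIV P w = {}") (simp_all add: markov_measure_def p_eq)
  qed
  then show ?thesis
    using surj meas by blast
qed

end
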